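(* Let $V=\{0,\tfrac12,1\}$ and consider any sentential language with an atomic expressive semantics whose consequence relation is induced by the truth-relation $ss\cap tt$. Then no binary connective of the language (with any truth function) is a G-conditional.
   Context: $ss\cap tt=\models_{\{1\},\{1\}}\cap\models_{\{1,\frac12\},\{1,\frac12\}}$, where $\gamma\models_{\mathcal{D}_p,\mathcal{D}_c}\delta$ iff ($\gamma\subseteq\mathcal{D}_p\Rightarrow\delta\cap\mathcal{D}_c\neq\emptyset$). A semantics: set of valuations mapping atoms to $V$, interpreting each connective by a truth function fixed across valuations, extended compositionally, such that every assignment of values to finitely many distinct atoms is realized. Atomic expressive: for every $\gamma\subseteq V$ there are a set of formulas $\Gamma$ and a valuation $v$ with $v(\Gamma)=\gamma$. Consequence: $\Gamma\vdash\Delta$ iff $v(\Gamma)\models v(\Delta)$ for all $v$; $\Gamma,A$ denotes $\Gamma\cup\{A\}$. A G-conditional $\to$ satisfies for all $\Gamma,\Delta,A,B$: $\Gamma\vdash A\to B,\Delta$ iff $\Gamma,A\vdash B,\Delta$; and $\Gamma,A\to B\vdash\Delta$ iff ($\Gamma\vdash A,\Delta$ and $\Gamma,B\vdash\Delta$). *)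

theory Defs
  imports Main
begin

datatype tv = Zero | Half | One

datatype ('a, 'c) form = Atom 'a | Conn 'c "('a, 'c) form list"

inductive wf :: "('c \<Rightarrow> nat) \<Rightarrow> ('a, 'c) form \<Rightarrow> bool" for ar where
  wf_Atom: "wf ar (Atom p)"
| wf_Conn: "length As = ar c \<Longrightarrow> (\<forall>A\<in>set As. wf ar A) \<Longrightarrow> wf ar (Conn c As)"

fun eval :: "('c \<Rightarrow> tv list \<Rightarrow> tv) \<Rightarrow> ('a \<Rightarrow> tv) \<Rightarrow> ('a, 'c) form \<Rightarrow> tv" where
  "eval I e (Atom p) = e p"
| "eval I e (Conn c As) = I c (map (eval I e) As)"

definition models_D :: "tv set \<Rightarrow> tv set \<Rightarrow> tv set \<Rightarrow> tv set \<Rightarrow> bool" where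
  "models_D Dp Dc \<gamma> \<delta> \<longleftrightarrow> (\<gamma> \<subseteq> Dp \<longrightarrow> \<delta> \<inter> Dc \<noteq> {})"

definition ss_cap_tt :: "tv set \<Rightarrow> tv set \<Rightarrow> bool" where
  "ss_cap_tt \<gamma> \<delta> \<longleftrightarrow> models_D {One} {One} \<gamma> \<delta> \<and> models_D {One, Half} {One, Half} \<gamma> \<delta>"

text \<open>A semantics is given by a set S of atom assignments (each extended compositionally
  via eval I); every assignment of values to finitely many atoms must be realized.\<close>
definition is_semantics :: "('a \<Rightarrow> tv) set \<Rightarrow> bool" where
  "is_semantics S \<longleftrightarrow> (\<forall>X f. finite X \<longrightarrow> (\<exists>e\<in>S. \<forall>p\<in>X. e p = f p))"

definition atomic_expressive :: "('c \<Rightarrow> nat) \<Rightarrow> ('c \<Rightarrow> tv list \<Rightarrow> tv) \<Rightarrow> ('a \<Rightarrow> tv) set \<Rightarrow> bool" where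
  "atomic_expressive ar I S \<longleftrightarrow>
     (\<forall>\<gamma>. \<exists>\<Gamma>. \<Gamma> \<subseteq> {A. wf ar A} \<and> (\<exists>e\<in>S. eval I e ` \<Gamma> = \<gamma>))"

definition cons :: "('c \<Rightarrow> tv list \<Rightarrow> tv) \<Rightarrow> ('a \<Rightarrow> tv) set
    \<Rightarrow> ('a, 'c) form set \<Rightarrow> ('a, 'c) form set \<Rightarrow> bool" where
  "cons I S \<Gamma> \<Delta> \<longleftrightarrow> (\<forall>e\<in>S. ss_cap_tt (eval I e ` \<Gamma>) (eval I e ` \<Delta>))"

definition G_conditional :: "('c \<Rightarrow> nat) \<Rightarrow> ('c \<Rightarrow> tv list \<Rightarrow> tv) \<Rightarrow> ('a \<Rightarrow> tv) set \<Rightarrow> 'c \<Rightarrow> bool" where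
  "G_conditional ar I S c \<longleftrightarrow>
     (\<forall>\<Gamma> \<Delta> A B. \<Gamma> \<subseteq> {X. wf ar X} \<longrightarrow> \<Delta> \<subseteq> {X. wf ar X} \<longrightarrow> wf ar A \<longrightarrow> wf ar B \<longrightarrow>
        (cons I S \<Gamma> (insert (Conn c [A, B]) \<Delta>) \<longleftrightarrow> cons I S (insert A \<Gamma>) (insert B \<Delta>)) \<and>
        (cons I S (insert (Conn c [A, B]) \<Gamma>) \<Delta> \<longleftrightarrow>
           (cons I S \<Gamma> (insert A \<Delta>) \<and> cons I S (insert B \<Gamma>) \<Delta>)))"

end

theory Submission
  imports Defs
begin

text \<open>A G-conditional validates three familiar rules: \<open>\<turnstile> A \<rightarrow> B, A\<close>, modus ponens
  \<open>A \<rightarrow> B, A \<turnstile> B\<close>, and \<open>A \<turnstile> (A \<rightarrow> B) \<rightarrow> B\<close>. By atomic expressiveness some valuation gives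
  \<open>A\<close> the value \<open>1/2\<close> and \<open>B\<close> the value \<open>0\<close>. Since \<open>1/2\<close> is not designated as a
  conclusion under \<open>ss\<close>, the first rule forces \<open>A \<rightarrow> B\<close> to be \<open>1\<close>; modus ponens, applied to
  \<open>A \<rightarrow> B\<close> and \<open>B\<close>, then forces \<open>(A \<rightarrow> B) \<rightarrow> B\<close> to be \<open>0\<close>; but \<open>1/2\<close> is designated as a
  premise under \<open>tt\<close>, so the third rule fails.\<close>

lemma ss_cap_tt_iff:
  "ss_cap_tt \<gamma> \<delta> \<longleftrightarrow> (\<gamma> \<subseteq> {One} \<longrightarrow> One \<in> \<delta>) \<and> (\<gamma> \<subseteq> {One, Half} \<longrightarrow> One \<in> \<delta> \<or> Half \<in> \<delta>)"
  unfolding ss_cap_tt_def models_D_def by blast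

lemma ss_cap_tt_reflexive: "x \<in> \<gamma> \<Longrightarrow> x \<in> \<delta> \<Longrightarrow> ss_cap_tt \<gamma> \<delta>"
  by (cases x) (auto simp: ss_cap_tt_iff)

lemma cons_reflexive: "A \<in> \<Gamma> \<Longrightarrow> A \<in> \<Delta> \<Longrightarrow> cons I S \<Gamma> \<Delta>"
  unfolding cons_def by (auto intro: ss_cap_tt_reflexive)

lemma consD: "cons I S \<Gamma> \<Delta> \<Longrightarrow> e \<in> S \<Longrightarrow> ss_cap_tt (eval I e ` \<Gamma>) (eval I e ` \<Delta>)"
  unfolding cons_def by simp

lemma wf_binary_Conn: "ar c = 2 \<Longrightarrow> wf ar A \<Longrightarrow> wf ar B \<Longrightarrow> wf ar (Conn c [A, B])"
  by (simp add: wf_Conn)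

lemma atomic_expressive_realizes:
  assumes "atomic_expressive ar I S"
  obtains e A B where "e \<in> S" "wf ar A" "wf ar B" "eval I e A = x" "eval I e B = y"
proof -
  obtain \<Gamma> e where \<Gamma>: "\<Gamma> \<subseteq> {A. wf ar A}" and e: "e \<in> S" and realized: "eval I e ` \<Gamma> = {x, y}"
    using assms unfolding atomic_expressive_def by (elim allE[of _ "{x, y}"]) blast
  have "x \<in> eval I e ` \<Gamma>" "y \<in> eval I e ` \<Gamma>"
    by (simp_all add: realized)
  then obtain A B where "A \<in> \<Gamma>" "B \<in> \<Gamma>" "eval I e A = x" "eval I e B = y"
    by (elim imageE) simp
  with \<Gamma> e show thesis
    using that by blast
qed

lemma G_conditional_right:
  assumes "G_conditional ar I S c"
    and "\<Gamma> \<subseteq> {X. wf ar X}" "\<Delta> \<subseteq> {X. wf ar X}" "wf ar A" "wf ar B"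
  shows "cons I S \<Gamma> (insert (Conn c [A, B]) \<Delta>) \<longleftrightarrow> cons I S (insert A \<Gamma>) (insert B \<Delta>)"
  using assms unfolding G_conditional_def by blast

lemma G_conditional_left:
  assumes "G_conditional ar I S c"
    and "\<Gamma> \<subseteq> {X. wf ar X}" "\<Delta> \<subseteq> {X. wf ar X}" "wf ar A" "wf ar B"
  shows "cons I S (insert (Conn c [A, B]) \<Gamma>) \<Delta> \<longleftrightarrow>
           cons I S \<Gamma> (insert A \<Delta>) \<and> cons I S (insert B \<Gamma>) \<Delta>"
  using assms unfolding G_conditional_def by blast

lemma G_conditional_valid_cond_or_antecedent:
  assumes "G_conditional ar I S c" "wf ar A" "wf ar B"
  shows "cons I S {} {Conn c [A, B], A}"
  using G_conditional_right[OF assms(1) _ _ assms(2,3), of "{}" "{A}"] assms(2)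
  by (auto intro: cons_reflexive)

lemma G_conditional_modus_ponens:
  assumes "G_conditional ar I S c" "wf ar A" "wf ar B"
  shows "cons I S {Conn c [A, B], A} {B}"
  using G_conditional_left[OF assms(1) _ _ assms(2,3), of "{A}" "{B}"] assms(2,3)
  by (auto intro: cons_reflexive)

lemma G_conditional_antecedent_entails_cond_cond:
  assumes "G_conditional ar I S c" "ar c = 2" "wf ar A" "wf ar B"
  shows "cons I S {A} {Conn c [Conn c [A, B], B]}"
proof -
  have "wf ar (Conn c [A, B])"
    using assms(2-4) by (rule wf_binary_Conn)
  then show ?thesis
    using G_conditional_right[OF assms(1) _ _ _ assms(4), of "{A}" "{}" "Conn c [A, B]"] assms
      G_conditional_modus_ponens[OF assms(1,3,4)]
    by simp
qed

theorem theorem4p4: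
  fixes ar :: "'c \<Rightarrow> nat" and I :: "'c \<Rightarrow> tv list \<Rightarrow> tv"
    and S :: "('a \<Rightarrow> tv) set" and c :: 'c
  assumes "is_semantics S"
    and "atomic_expressive ar I S"
    and "ar c = 2"
  shows "\<not> G_conditional ar I S c"
proof
  assume G: "G_conditional ar I S c"
  obtain e A B where e: "e \<in> S" and wf: "wf ar A" "wf ar B"
    and A: "eval I e A = Half" and B: "eval I e B = Zero"
    using atomic_expressive_realizes[OF assms(2)] .
  let ?AB = "Conn c [A, B]"
  let ?D = "Conn c [?AB, B]"
  have "ss_cap_tt {} {eval I e ?AB, Half}"
    using consD[OF G_conditional_valid_cond_or_antecedent[OF G wf] e] A by simp
  then have "eval I e ?AB = One"
    by (simp add: ss_cap_tt_iff)
  moreover have "ss_cap_tt {eval I e ?D, eval I e ?AB} {Zero}"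
    using consD[OF G_conditional_modus_ponens[OF G wf_binary_Conn[OF assms(3) wf] wf(2)] e] B
    by simp
  ultimately have "eval I e ?D = Zero"
    by (cases "eval I e ?D") (simp_all add: ss_cap_tt_iff)
  moreover have "ss_cap_tt {Half} {eval I e ?D}"
    using consD[OF G_conditional_antecedent_entails_cond_cond[OF G assms(3) wf] e] A by simp
  ultimately show False
    by (simp add: ss_cap_tt_iff)
qed

end
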